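(* Let $G$ be a $d$-regular graph on $n$ vertices and let $k$ be a positive integer with $NPO(k)\le n< NPO(k+1)$. Then the Laplacian matrix $L(G)$ has at least $k$ eigenvalues (counted with multiplicity) that are greater than or equal to $d$.
   Context: All graphs are finite, simple, unweighted and undirected; $A(G)$ is the adjacency matrix and $L(G)=D(G)-A(G)$ the Laplacian, where $D(G)$ is the diagonal matrix of degrees. For a positive integer $k$, $NPO(k)$ is the smallest integer $n$ such that the adjacency matrix of every graph with at least $n$ vertices has at least $k$ nonpositive eigenvalues (counted with multiplicity). *)

theory Defs
  imports "Jordan_Normal_Form.Char_Poly"
begin

text \<open>A finite simple graph on the vertex set {0..<n}, given by an edge relation E
  (only its restriction to {0..<n} matters): symmetric and irreflexive.\<close>
definition simple_graph :: "nat \<Rightarrow> (nat \<Rightarrow> nat \<Rightarrow> bool) \<Rightarrow> bool" where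
  "simple_graph n E \<longleftrightarrow> (\<forall>i<n. \<forall>j<n. E i j \<longrightarrow> E j i) \<and> (\<forall>i<n. \<not> E i i)"

definition degree :: "nat \<Rightarrow> (nat \<Rightarrow> nat \<Rightarrow> bool) \<Rightarrow> nat \<Rightarrow> nat" where
  "degree n E i = card {j. j < n \<and> E i j}"

definition regular :: "nat \<Rightarrow> (nat \<Rightarrow> nat \<Rightarrow> bool) \<Rightarrow> nat \<Rightarrow> bool" where
  "regular n E d \<longleftrightarrow> (\<forall>i<n. degree n E i = d)"

definition adj_mat :: "nat \<Rightarrow> (nat \<Rightarrow> nat \<Rightarrow> bool) \<Rightarrow> real mat" where
  "adj_mat n E = mat n n (\<lambda>(i, j). if E i j then 1 else 0)"

definition deg_mat :: "nat \<Rightarrow> (nat \<Rightarrow> nat \<Rightarrow> bool) \<Rightarrow> real mat" where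
  "deg_mat n E = mat n n (\<lambda>(i, j). if i = j then real (degree n E i) else 0)"

definition lap_mat :: "nat \<Rightarrow> (nat \<Rightarrow> nat \<Rightarrow> bool) \<Rightarrow> real mat" where
  "lap_mat n E = deg_mat n E - adj_mat n E"

definition num_eigs :: "(real \<Rightarrow> bool) \<Rightarrow> real mat \<Rightarrow> nat" where
  "num_eigs P A = size (filter_mset P (proots (char_poly A)))"

definition NPO :: "nat \<Rightarrow> nat" where
  "NPO k = (LEAST n. \<forall>m\<ge>n. \<forall>E. simple_graph m E \<longrightarrow> k \<le> num_eigs (\<lambda>x. x \<le> 0) (adj_mat m E))"

end

theory Submission
  imports Defs "Jordan_Normal_Form.Schur_Decomposition" "Jordan_Normal_Form.DL_Rank" "HOL-Library.Ramsey"
begin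

(* For a d-regular graph, L(G) = d I - A(G), so the eigenvalues of L(G) that are
   >= d correspond (with multiplicity) to the eigenvalues of A(G) that are <= 0.  Hence the
   theorem follows once we know that NPO k is well defined, i.e. that every graph with
   sufficiently many vertices has at least k nonpositive adjacency eigenvalues: then n >= NPO k
   gives k nonpositive eigenvalues of A(G), hence k eigenvalues >= d of L(G). *)

lemma mult_mat_vec_index:
  fixes M :: "'a :: comm_semiring_0 mat"
  assumes "M \<in> carrier_mat n k" "c \<in> carrier_vec k" "i < n"
  shows "(M *\<^sub>v c) $ i = (\<Sum>j<k. M $$ (i,j) * c $ j)"
  using assms unfolding mult_mat_vec_def scalar_prod_def
  by (auto simp: lessThan_atLeast0 intro!: sum.cong)

lemma vec_nonzero_obtain:
  assumes "c \<in> carrier_vec k" "c \<noteq> 0\<^sub>v k"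
  obtains t where "t < k" "c $ t \<noteq> 0"
  using assms by (metis carrier_vecD eq_vecI index_zero_vec(1) index_zero_vec(2))

lemma sym_mat_index:
  assumes "A \<in> carrier_mat n n" "transpose_mat A = A" "i < n" "j < n"
  shows "A $$ (i,j) = A $$ (j,i)"
  using assms by (metis carrier_matD index_transpose_mat(1))

(* Every complex square matrix of positive size has an eigenvector: its characteristic
   polynomial splits over the complex numbers. *)
lemma complex_eigenvector_exists:
  assumes A: "(A :: complex mat) \<in> carrier_mat n n" and n: "n > 0"
  shows "\<exists>v l. v \<in> carrier_vec n \<and> v \<noteq> 0\<^sub>v n \<and> A *\<^sub>v v = l \<cdot>\<^sub>v v"
proof -
  from char_poly_factorized[OF A] obtain as where
    cp: "char_poly A = (\<Prod>a\<leftarrow>as. [:- a, 1:])" and len: "length as = n" by auto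
  from len n obtain l rest where as: "as = l # rest" by (cases as, auto)
  have "poly (char_poly A) l = 0" unfolding cp as by simp
  hence "eigenvalue A l" using eigenvalue_root_char_poly[OF A] by simp
  then obtain v where "eigenvector A v l" unfolding eigenvalue_def by auto
  thus ?thesis unfolding eigenvector_def using A by auto
qed

(* The eigenvalues of a real symmetric matrix, viewed as a complex matrix, are real:
   the Hermitian form v^* A v equals its own conjugate and also l * |v|^2. *)
lemma sym_complex_eigenvalue_real:
  fixes A :: "real mat"
  assumes A: "A \<in> carrier_mat n n" and sym: "transpose_mat A = A"
    and v: "v \<in> carrier_vec n" "v \<noteq> 0\<^sub>v n"
    and ev: "map_mat complex_of_real A *\<^sub>v v = l \<cdot>\<^sub>v v"
  shows "Im l = 0"
proof -
  have evi: "(\<Sum>j<n. complex_of_real (A $$ (i,j)) * v $ j) = l * v $ i" if "i < n" for i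
  proof -
    have "(map_mat complex_of_real A *\<^sub>v v) $ i = (\<Sum>j<n. complex_of_real (A $$ (i,j)) * v $ j)"
      using A v that by (subst mult_mat_vec_index[of _ n n]) auto
    thus ?thesis using ev that v by simp
  qed
  define r where "r = (\<Sum>i<n. cnj (v $ i) * v $ i)"
  define s where "s = (\<Sum>i<n. cnj (v $ i) * (\<Sum>j<n. complex_of_real (A $$ (i,j)) * v $ j))"
  have "s = (\<Sum>i<n. cnj (v $ i) * (l * v $ i))"
    unfolding s_def by (rule sum.cong, auto simp: evi)
  hence s_eq: "s = l * r"
    unfolding r_def by (simp add: sum_distrib_left mult.commute mult.left_commute)
  have "cnj s = (\<Sum>i<n. \<Sum>j<n. v $ i * complex_of_real (A $$ (i,j)) * cnj (v $ j))"
    unfolding s_def by (simp add: sum_distrib_left mult.commute mult.left_commute)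
  also have "\<dots> = (\<Sum>j<n. \<Sum>i<n. v $ i * complex_of_real (A $$ (i,j)) * cnj (v $ j))"
    by (rule sum.swap)
  also have "\<dots> = s" unfolding s_def sum_distrib_left
    by (intro sum.cong refl, subst sym_mat_index[OF A sym])
       (auto simp: mult.commute mult.left_commute)
  finally have s_real: "cnj s = s" .
  have r_norm: "r = complex_of_real (\<Sum>i<n. (cmod (v $ i))^2)"
    unfolding r_def of_real_sum
    by (intro sum.cong refl) (metis complex_norm_square mult.commute of_real_power)
  obtain i where i: "i < n" "v $ i \<noteq> 0" using vec_nonzero_obtain[OF v] .
  have "(cmod (v $ i))^2 \<le> (\<Sum>i<n. (cmod (v $ i))^2)"
    using i by (intro member_le_sum) auto
  moreover have "(cmod (v $ i))^2 > 0" using i by simp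
  ultimately have r0: "r \<noteq> 0" unfolding r_norm by (metis not_less of_real_eq_0_iff order_refl)
  have "cnj l * cnj r = l * r" using s_eq s_real by (metis complex_cnj_mult)
  moreover have "cnj r = r" unfolding r_norm by (simp only: complex_cnj_complex_of_real)
  ultimately have "cnj l = l" using r0 by simp
  thus ?thesis by (metis complex_cnj_cancel_iff Reals_cnj_iff complex_is_Real_iff)
qed

(* A complex eigenvector of a real matrix for a real eigenvalue yields a real eigenvector:
   its real part or its imaginary part. *)
lemma real_eigenvector_from_complex:
  fixes A :: "real mat"
  assumes A: "A \<in> carrier_mat n n" and v: "v \<in> carrier_vec n" "v \<noteq> 0\<^sub>v n"
    and ev: "map_mat complex_of_real A *\<^sub>v v = complex_of_real e \<cdot>\<^sub>v v"
  shows "\<exists>w. w \<in> carrier_vec n \<and> w \<noteq> 0\<^sub>v n \<and> A *\<^sub>v w = e \<cdot>\<^sub>v w"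
proof -
  have evi: "(\<Sum>j<n. complex_of_real (A $$ (i,j)) * v $ j) = complex_of_real e * v $ i"
    if "i < n" for i
  proof -
    have "(map_mat complex_of_real A *\<^sub>v v) $ i = (\<Sum>j<n. complex_of_real (A $$ (i,j)) * v $ j)"
      using A v that by (subst mult_mat_vec_index[of _ n n]) auto
    thus ?thesis using ev that v by simp
  qed
  have part_ev: "A *\<^sub>v map_vec f v = e \<cdot>\<^sub>v map_vec f v" if f: "f = Re \<or> f = Im" for f
  proof (rule eq_vecI)
    fix i assume "i < dim_vec (e \<cdot>\<^sub>v map_vec f v)"
    hence i: "i < n" using v by simp
    have "(A *\<^sub>v map_vec f v) $ i = (\<Sum>j<n. A $$ (i,j) * f (v $ j))"
      using i A v by (subst mult_mat_vec_index[of _ n n]) auto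
    also have "\<dots> = f (\<Sum>j<n. complex_of_real (A $$ (i,j)) * v $ j)"
      using f by (auto simp: Re_sum Im_sum)
    also have "\<dots> = e * f (v $ i)" unfolding evi[OF i] using f by auto
    finally show "(A *\<^sub>v map_vec f v) $ i = (e \<cdot>\<^sub>v map_vec f v) $ i" using i v by simp
  qed (use A v in auto)
  obtain i where i: "i < n" "v $ i \<noteq> 0" using vec_nonzero_obtain[OF v] .
  hence "Re (v $ i) \<noteq> 0 \<or> Im (v $ i) \<noteq> 0" by (simp add: complex_eq_iff)
  then obtain f where f: "f = Re \<or> f = Im" and "f (v $ i) \<noteq> 0" by blast
  hence "map_vec f v \<noteq> 0\<^sub>v n" using i v by (metis index_map_vec(1) index_zero_vec(1) carrier_vecD)
  thus ?thesis using part_ev[OF f] v by (intro exI[of _ "map_vec f v"]) auto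
qed

lemma sym_real_eigenvector:
  fixes A :: "real mat"
  assumes A: "A \<in> carrier_mat n n" and sym: "transpose_mat A = A" and n: "n > 0"
  shows "\<exists>v e. v \<in> carrier_vec n \<and> v \<noteq> 0\<^sub>v n \<and> A *\<^sub>v v = e \<cdot>\<^sub>v v"
proof -
  obtain v l where v: "v \<in> carrier_vec n" "v \<noteq> 0\<^sub>v n"
    and ev: "map_mat complex_of_real A *\<^sub>v v = l \<cdot>\<^sub>v v"
    using complex_eigenvector_exists[of "map_mat complex_of_real A", OF _ n] A by auto
  have "l = complex_of_real (Re l)"
    using sym_complex_eigenvalue_real[OF A sym v ev] by (simp add: complex_eq_iff)
  thus ?thesis using real_eigenvector_from_complex[OF A v] ev by metis
qed

definition orthonormal_mat :: "nat \<Rightarrow> real mat \<Rightarrow> bool" where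
  "orthonormal_mat n P \<longleftrightarrow> P \<in> carrier_mat n n \<and> transpose_mat P * P = 1\<^sub>m n"

(* For square matrices a left inverse is also a right inverse. *)
lemma orthonormal_mat_right_inverse:
  assumes "orthonormal_mat n P"
  shows "P * transpose_mat P = 1\<^sub>m n"
  using assms mat_mult_left_right_inverse[of "transpose_mat P" n P]
  unfolding orthonormal_mat_def by auto

lemma orthonormal_mat_mult:
  assumes P: "orthonormal_mat n P" and Q: "orthonormal_mat n Q"
  shows "orthonormal_mat n (P * Q)"
proof -
  have Pc: "P \<in> carrier_mat n n" and Qc: "Q \<in> carrier_mat n n"
    using P Q unfolding orthonormal_mat_def by auto
  have "transpose_mat (P * Q) * (P * Q) = transpose_mat Q * (transpose_mat P * P) * Q"
    using Pc Qc by (simp add: transpose_mult assoc_mult_mat[of _ n n _ n _ n])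
  thus ?thesis using P Q Pc Qc unfolding orthonormal_mat_def by auto
qed

lemma orthonormal_normalised_cols:
  fixes ws :: "real vec list"
  assumes ws: "set ws \<subseteq> carrier_vec n" "corthogonal ws" "length ws = n"
  defines "W \<equiv> mat_of_cols n (map (\<lambda>w. (1 / sqrt (w \<bullet> w)) \<cdot>\<^sub>v w) ws)"
  shows "orthonormal_mat n W" and "\<And>j. j < n \<Longrightarrow> col W j = (1 / sqrt (ws!j \<bullet> ws!j)) \<cdot>\<^sub>v ws ! j"
proof -
  define us where "us = map (\<lambda>w. (1 / sqrt (w \<bullet> w)) \<cdot>\<^sub>v w) ws"
  have len_us: "length us = n" unfolding us_def using ws by simp
  have us_car: "us ! i \<in> carrier_vec n" if "i < n" for i
    using ws that unfolding us_def by auto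
  have ws_orth: "ws ! i \<bullet> ws ! j = 0 \<longleftrightarrow> i \<noteq> j" if "i < n" "j < n" for i j
    using corthogonalD[OF ws(2), of i j] that ws(3) by simp
  have ws_pos: "ws ! i \<bullet> ws ! i > 0" if "i < n" for i
  proof -
    have "ws ! i \<bullet> ws ! i \<ge> 0"
      using ws that unfolding scalar_prod_def by (auto intro!: sum_nonneg)
    thus ?thesis using ws_orth[OF that that] by simp
  qed
  have us_orth: "us ! i \<bullet> us ! j = (if i = j then 1 else 0)" if ij: "i < n" "j < n" for i j
  proof -
    have "ws ! i \<in> carrier_vec n" "ws ! j \<in> carrier_vec n" using ws ij by auto
    hence "us ! i \<bullet> us ! j
        = (1 / sqrt (ws!i \<bullet> ws!i)) * (1 / sqrt (ws!j \<bullet> ws!j)) * (ws ! i \<bullet> ws ! j)"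
      unfolding us_def using ij ws by (simp add: smult_scalar_prod_distrib scalar_prod_smult_distrib)
    thus ?thesis using ws_orth[OF ij] ws_pos[OF ij(1)]
      by (auto simp: real_sqrt_mult[symmetric] field_simps)
  qed
  have Wc: "W \<in> carrier_mat n n" unfolding W_def us_def[symmetric] using len_us
    by (metis mat_of_cols_carrier(1))
  have colW: "col W j = us ! j" if "j < n" for j
    unfolding W_def us_def[symmetric] using that len_us us_car by simp
  have "transpose_mat W * W = 1\<^sub>m n"
    by (rule eq_matI, insert Wc colW us_orth, auto)
  thus "orthonormal_mat n W" using Wc unfolding orthonormal_mat_def by blast
  show "col W j = (1 / sqrt (ws!j \<bullet> ws!j)) \<cdot>\<^sub>v ws ! j" if "j < n" for j
    using colW[OF that] that ws(3) unfolding us_def by simp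
qed

(* Every unit vector is the first column of some orthonormal matrix: complete it to a basis,
   apply Gram-Schmidt and normalise. *)
lemma orthonormal_extension:
  fixes v :: "real vec"
  assumes v: "v \<in> carrier_vec n" and vv: "v \<bullet> v = 1"
  shows "\<exists>W. orthonormal_mat n W \<and> col W 0 = v"
proof -
  have v0: "v \<noteq> 0\<^sub>v n" using vv v by auto
  hence n: "n \<noteq> 0" using v by auto
  interpret cof_vec_space n "TYPE(real)" .
  define b where "b = basis_completion v"
  from basis_completion[OF v v0, folded b_def]
  have dist_b: "distinct b" and indep: "\<not> lin_dep (set b)" and b: "set b \<subseteq> carrier_vec n"
    and hdb: "hd b = v" and len_b: "length b = n" by auto
  from hdb len_b n obtain vs where bv: "b = v # vs" by (cases b, auto)
  define ws where "ws = gram_schmidt n b"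
  from gram_schmidt_result[OF b dist_b indep ws_def]
  have ws: "set ws \<subseteq> carrier_vec n" "corthogonal ws" "length ws = n"
    by (auto simp: len_b)
  from gram_schmidt_hd[OF v, of vs, folded bv] have "hd ws = v" unfolding ws_def .
  hence "ws ! 0 = v" using ws(3) n by (metis hd_conv_nth list.size(3))
  thus ?thesis using orthonormal_normalised_cols[OF ws] n vv by auto
qed

definition diagm :: "real list \<Rightarrow> real mat" where
  "diagm es = mat (length es) (length es) (\<lambda>(i,j). if i = j then es ! i else 0)"

lemma diagm_carrier[simp]: "diagm es \<in> carrier_mat (length es) (length es)"
  unfolding diagm_def by auto

lemma orthonormal_deflation:
  fixes A :: "real mat"
  assumes A: "A \<in> carrier_mat (Suc m) (Suc m)" and sym: "transpose_mat A = A"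
    and W: "orthonormal_mat (Suc m) W" and cW: "col W 0 = v" and ev: "A *\<^sub>v v = e \<cdot>\<^sub>v v"
  shows "\<exists>A3 \<in> carrier_mat m m. transpose_mat A3 = A3 \<and>
    transpose_mat W * A * W = four_block_mat (mat 1 1 (\<lambda>_. e)) (0\<^sub>m 1 m) (0\<^sub>m m 1) A3"
proof -
  let ?n = "Suc m"
  have Wc: "W \<in> carrier_mat ?n ?n" and WW: "transpose_mat W * W = 1\<^sub>m ?n"
    using W unfolding orthonormal_mat_def by auto
  define A' where "A' = transpose_mat W * A * W"
  have A': "A' \<in> carrier_mat ?n ?n" unfolding A'_def using Wc A by auto
  have A'_sym: "transpose_mat A' = A'"
  proof -
    have "transpose_mat A' = transpose_mat W * transpose_mat (transpose_mat W * A)"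
      unfolding A'_def using Wc A by (subst transpose_mult[of _ ?n ?n]) auto
    also have "transpose_mat (transpose_mat W * A) = transpose_mat A * W"
      using Wc A by (subst transpose_mult[of _ ?n ?n]) auto
    finally show ?thesis unfolding A'_def sym using Wc A
      by (simp add: assoc_mult_mat[of _ ?n ?n _ ?n _ ?n])
  qed
  have col0: "A' $$ (i, 0) = (if i = 0 then e else 0)" if i: "i < ?n" for i
  proof -
    have "A' $$ (i,0) = (transpose_mat W * (A * W)) $$ (i,0)"
      unfolding A'_def using Wc A by (simp add: assoc_mult_mat[of _ ?n ?n _ ?n _ ?n])
    also have "\<dots> = col W i \<bullet> (A *\<^sub>v col W 0)" using i Wc A by (simp add: mult_mat_vec_def)
    also have "\<dots> = e * (col W i \<bullet> col W 0)"
      using Wc i ev cW col_dim[of W 0] by (simp add: scalar_prod_smult_distrib[of _ ?n])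
    also have "col W i \<bullet> col W 0 = (transpose_mat W * W) $$ (i, 0)" using Wc i by simp
    finally show ?thesis using WW i by simp
  qed
  define A3 where "A3 = mat m m (\<lambda>(i,j). A' $$ (Suc i, Suc j))"
  have "transpose_mat A3 = A3"
    by (rule eq_matI) (auto simp: A3_def sym_mat_index[OF A' A'_sym])
  moreover have "A' = four_block_mat (mat 1 1 (\<lambda>_. e)) (0\<^sub>m 1 m) (0\<^sub>m m 1) A3"
    by (rule eq_matI, insert A' col0 sym_mat_index[OF A' A'_sym], auto simp: A3_def)
  ultimately show ?thesis unfolding A'_def by (intro bexI[of _ A3]) (auto simp: A3_def)
qed

lemma sym_unit_eigenvector:
  fixes A :: "real mat"
  assumes A: "A \<in> carrier_mat n n" and sym: "transpose_mat A = A" and n: "n > 0"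
  shows "\<exists>v e. v \<in> carrier_vec n \<and> v \<bullet> v = 1 \<and> A *\<^sub>v v = e \<cdot>\<^sub>v v"
proof -
  obtain v0 e where v0: "v0 \<in> carrier_vec n" "v0 \<noteq> 0\<^sub>v n" and ev0: "A *\<^sub>v v0 = e \<cdot>\<^sub>v v0"
    using sym_real_eigenvector[OF A sym n] by auto
  obtain i where i: "i < n" "v0 $ i \<noteq> 0" using vec_nonzero_obtain[OF v0] .
  have "v0 $ i * v0 $ i \<le> (\<Sum>j<n. v0 $ j * v0 $ j)"
    using i by (intro member_le_sum) auto
  hence v0_pos: "v0 \<bullet> v0 > 0"
    using v0 i unfolding scalar_prod_def lessThan_atLeast0[symmetric]
    by (smt (verit) not_real_square_gt_zero carrier_vecD)
  define v where "v = (1 / sqrt (v0 \<bullet> v0)) \<cdot>\<^sub>v v0"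
  have "v \<in> carrier_vec n" unfolding v_def using v0 by auto
  moreover have "v \<bullet> v = 1" unfolding v_def using v0 v0_pos
    by (simp add: smult_scalar_prod_distrib scalar_prod_smult_distrib real_sqrt_mult[symmetric])
  moreover have "A *\<^sub>v v = e \<cdot>\<^sub>v v" unfolding v_def using ev0 v0 A
    by (simp add: mult_mat_vec smult_smult_assoc mult.commute)
  ultimately show ?thesis by blast
qed

lemma conj_mult:
  fixes A P Q :: "real mat"
  assumes "A \<in> carrier_mat n n" "P \<in> carrier_mat n n" "Q \<in> carrier_mat n n"
  shows "transpose_mat (P * Q) * A * (P * Q) = transpose_mat Q * (transpose_mat P * A * P) * Q"
  using assms by (simp add: transpose_mult assoc_mult_mat[of _ n n _ n _ n])

lemma orthonormal_border:
  fixes P :: "real mat"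
  assumes P: "orthonormal_mat m P" and A: "A \<in> carrier_mat m m"
  defines "B \<equiv> four_block_mat (1\<^sub>m 1) (0\<^sub>m 1 m) (0\<^sub>m m 1) P"
  shows "orthonormal_mat (Suc m) B"
    and "transpose_mat B * four_block_mat (mat 1 1 (\<lambda>_. e)) (0\<^sub>m 1 m) (0\<^sub>m m 1) A * B
       = four_block_mat (mat 1 1 (\<lambda>_. e)) (0\<^sub>m 1 m) (0\<^sub>m m 1) (transpose_mat P * A * P)"
proof -
  have Pc: "P \<in> carrier_mat m m" using P unfolding orthonormal_mat_def by auto
  have BT: "transpose_mat B = four_block_mat (1\<^sub>m 1) (0\<^sub>m 1 m) (0\<^sub>m m 1) (transpose_mat P)"
    unfolding B_def
    by (subst transpose_four_block_mat[OF one_carrier_mat zero_carrier_mat zero_carrier_mat Pc]) simp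
  have "transpose_mat B * B = four_block_mat (1\<^sub>m 1) (0\<^sub>m 1 m) (0\<^sub>m m 1) (transpose_mat P * P)"
    unfolding BT unfolding B_def using Pc
    by (subst mult_four_block_mat[OF one_carrier_mat zero_carrier_mat zero_carrier_mat _
          one_carrier_mat zero_carrier_mat zero_carrier_mat Pc]) auto
  also have "\<dots> = 1\<^sub>m (Suc m)" using P unfolding orthonormal_mat_def by (auto intro!: eq_matI)
  finally show "orthonormal_mat (Suc m) B"
    unfolding orthonormal_mat_def B_def using Pc by auto
  show "transpose_mat B * four_block_mat (mat 1 1 (\<lambda>_. e)) (0\<^sub>m 1 m) (0\<^sub>m m 1) A * B
      = four_block_mat (mat 1 1 (\<lambda>_. e)) (0\<^sub>m 1 m) (0\<^sub>m m 1) (transpose_mat P * A * P)"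
    unfolding BT unfolding B_def using Pc A
    by (subst mult_four_block_mat[OF one_carrier_mat zero_carrier_mat zero_carrier_mat _
          _ zero_carrier_mat zero_carrier_mat A], simp, simp,
        subst mult_four_block_mat[OF _ _ _ _ one_carrier_mat zero_carrier_mat zero_carrier_mat Pc])
       auto
qed

lemma diagm_Cons:
  "diagm (e # es) = four_block_mat (mat 1 1 (\<lambda>_. e)) (0\<^sub>m 1 (length es)) (0\<^sub>m (length es) 1) (diagm es)"
  by (rule eq_matI) (auto simp: diagm_def)

(* Spectral theorem: a real symmetric matrix is orthonormally diagonalisable.  Induction on the
   size: split off a unit eigenvector by deflation and diagonalise the remaining block. *)
theorem sym_spectral:
  fixes A :: "real mat"
  assumes "A \<in> carrier_mat n n" and "transpose_mat A = A"
  shows "\<exists>P es. orthonormal_mat n P \<and> length es = n \<and> transpose_mat P * A * P = diagm es"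
  using assms
proof (induction n arbitrary: A)
  case 0
  show ?case
    by (rule exI[of _ "1\<^sub>m 0"], rule exI[of _ "[]"])
       (insert 0, auto intro!: eq_matI simp: diagm_def orthonormal_mat_def)
next
  case (Suc m A)
  obtain v e where v: "v \<in> carrier_vec (Suc m)" "v \<bullet> v = 1" and ev: "A *\<^sub>v v = e \<cdot>\<^sub>v v"
    using sym_unit_eigenvector[OF Suc.prems] by auto
  obtain W where W: "orthonormal_mat (Suc m) W" and cW: "col W 0 = v"
    using orthonormal_extension[OF v] by auto
  obtain A3 where A3: "A3 \<in> carrier_mat m m" "transpose_mat A3 = A3"
    and WAW: "transpose_mat W * A * W = four_block_mat (mat 1 1 (\<lambda>_. e)) (0\<^sub>m 1 m) (0\<^sub>m m 1) A3"
    using orthonormal_deflation[OF Suc.prems W cW ev] by auto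
  obtain P3 es3 where P3: "orthonormal_mat m P3" and les: "length es3 = m"
    and D3: "transpose_mat P3 * A3 * P3 = diagm es3"
    using Suc.IH[OF A3] by auto
  define B where "B = four_block_mat (1\<^sub>m 1) (0\<^sub>m 1 m) (0\<^sub>m m 1) P3"
  note B = orthonormal_border[OF P3 A3(1), folded B_def]
  have "transpose_mat (W * B) * A * (W * B) = transpose_mat B * (transpose_mat W * A * W) * B"
    using conj_mult Suc.prems(1) W B(1) unfolding orthonormal_mat_def by blast
  also have "\<dots> = diagm (e # es3)"
    unfolding WAW B(2) D3 diagm_Cons les ..
  finally show ?case using orthonormal_mat_mult[OF W B(1)] les
    by (intro exI[of _ "W * B"] exI[of _ "e # es3"]) auto
qed

lemma proots_linear_prod: "proots (\<Prod>a\<leftarrow>es. [:- a, 1:]) = mset (es :: real list)"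
proof (induction es)
  case (Cons a es)
  have "(\<Prod>a\<leftarrow>es. [:- a, 1:]) \<noteq> 0"
    by (auto simp: prod_list_zero_iff)
  hence "proots ([:- a, 1:] * (\<Prod>a\<leftarrow>es. [:- a, 1:]))
      = proots [:- a, 1:] + proots (\<Prod>a\<leftarrow>es. [:- a, 1:])"
    by (intro proots_mult) auto
  thus ?case using Cons by (simp only: list.map prod_list.Cons proots_linear_factor) simp
qed simp

(* After orthonormal diagonalisation, the eigenvalues counted by num_eigs are exactly the
   diagonal entries, since similar matrices share their characteristic polynomial. *)
lemma num_eigs_orthonormal_diag:
  assumes A: "A \<in> carrier_mat n n" and P: "orthonormal_mat n P"
    and D: "transpose_mat P * A * P = diagm es" and les: "length es = n"
  shows "num_eigs Q A = length (filter Q es)"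
proof -
  have Pc: "P \<in> carrier_mat n n" and PP: "transpose_mat P * P = 1\<^sub>m n"
    using P unfolding orthonormal_mat_def by auto
  note PP' = orthonormal_mat_right_inverse[OF P]
  have "A = (P * transpose_mat P) * A * (P * transpose_mat P)" using A PP' by simp
  also have "\<dots> = P * (transpose_mat P * A * P) * transpose_mat P"
    using A Pc by (simp add: assoc_mult_mat[of _ n n _ n _ n])
  finally have "A = P * diagm es * transpose_mat P" unfolding D .
  hence "similar_mat A (diagm es)"
    by (intro similar_matI[of A "diagm es" P "transpose_mat P" n], insert A Pc PP PP' les, auto)
  hence "char_poly A = char_poly (diagm es)" by (rule char_poly_similar)
  also have "\<dots> = (\<Prod>a\<leftarrow>diag_mat (diagm es). [:- a, 1:])"
    by (rule char_poly_upper_triangular[of _ n], insert les, auto simp: upper_triangular_def diagm_def)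
  also have "diag_mat (diagm es) = es"
    by (rule nth_equalityI, auto simp: diag_mat_def diagm_def)
  finally show ?thesis unfolding num_eigs_def
    by (simp add: proots_linear_prod) (metis mset_filter size_mset)
qed

lemma mat_unit_vec: assumes C: "(C :: real mat) \<in> carrier_mat m k" and i: "i < k"
  shows "C *\<^sub>v unit_vec k i = col C i"
  by (rule eq_vecI, insert C i, auto)

lemma nontrivial_kernel:
  fixes C :: "real mat"
  assumes C: "C \<in> carrier_mat m k" and mk: "m < k"
  shows "\<exists>c \<in> carrier_vec k. c \<noteq> 0\<^sub>v k \<and> C *\<^sub>v c = 0\<^sub>v m"
proof (cases "distinct (cols C)")
  case True
  interpret vec_space "TYPE(real)" m .
  have "lin_dep (set (cols C))"
  proof (rule ccontr)
    assume ind: "\<not> lin_dep (set (cols C))"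
    have "set (cols C) \<subseteq> carrier V" using cols_dim[of C] C by (auto simp: carrier_matD)
    hence "card (set (cols C)) \<le> dim" using li_le_dim(2)[OF fin_dim _ ind] by simp
    moreover have "card (set (cols C)) = k" using True C by (simp add: distinct_card)
    ultimately show False using mk dim_is_n by simp
  qed
  from lin_depE[OF C this True] show ?thesis by blast
next
  case False
  then obtain i j where ij: "i < length (cols C)" "j < length (cols C)" "i \<noteq> j"
      "cols C ! i = cols C ! j"
    using distinct_conv_nth by blast
  hence ik: "i < k" "j < k" using C by auto
  hence colij: "col C i = col C j" using ij C by auto
  define c where "c = (unit_vec k i - unit_vec k j :: real vec)"
  have c: "c \<in> carrier_vec k" unfolding c_def by simp
  have "c $ i = 1" unfolding c_def using ik ij by simp
  hence c0: "c \<noteq> 0\<^sub>v k" using ik by auto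
  have "C *\<^sub>v c = C *\<^sub>v unit_vec k i - C *\<^sub>v unit_vec k j"
    unfolding c_def using C by (simp add: mult_minus_distrib_mat_vec)
  also have "\<dots> = 0\<^sub>v m" unfolding mat_unit_vec[OF C ik(1)] mat_unit_vec[OF C ik(2)] colij
    using C by auto
  finally show ?thesis using c c0 by blast
qed

lemma vanishing_combination:
  fixes Q :: "real mat"
  assumes Q: "Q \<in> carrier_mat n k" and N: "N \<subseteq> {..<n}" and Nk: "card N < k"
  shows "\<exists>c \<in> carrier_vec k. c \<noteq> 0\<^sub>v k \<and> (\<forall>i \<in> N. (Q *\<^sub>v c) $ i = 0)"
proof -
  define ns where "ns = sorted_list_of_set N"
  have finN: "finite N" using N finite_subset by blast
  have len_ns: "length ns = card N" and set_ns: "set ns = N"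
    unfolding ns_def using finN by auto
  define C where "C = mat (card N) k (\<lambda>(r,j). Q $$ (ns ! r, j))"
  have C: "C \<in> carrier_mat (card N) k" unfolding C_def by simp
  obtain c where c: "c \<in> carrier_vec k" "c \<noteq> 0\<^sub>v k" and Cc: "C *\<^sub>v c = 0\<^sub>v (card N)"
    using nontrivial_kernel[OF C Nk] by auto
  have "(Q *\<^sub>v c) $ i = 0" if iN: "i \<in> N" for i
  proof -
    from iN obtain r where r: "r < card N" "ns ! r = i" using set_ns len_ns
      by (metis in_set_conv_nth)
    have "i < n" using iN N by auto
    hence "row C r = row Q i" using r C Q unfolding C_def by (intro eq_vecI) auto
    hence "(C *\<^sub>v c) $ r = (Q *\<^sub>v c) $ i" using C Q r \<open>i < n\<close> by simp
    thus ?thesis using Cc r by simp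
  qed
  thus ?thesis using c by blast
qed

lemma quad_form_sum:
  fixes A :: "real mat"
  assumes A: "A \<in> carrier_mat n n" and x: "x \<in> carrier_vec n"
  shows "x \<bullet> (A *\<^sub>v x) = (\<Sum>i<n. \<Sum>l<n. x $ i * A $$ (i,l) * x $ l)"
  using A x unfolding scalar_prod_def mult_mat_vec_def
  by (auto simp: lessThan_atLeast0 sum_distrib_left mult.assoc intro!: sum.cong)

lemma quad_form_diagm:
  assumes y: "y \<in> carrier_vec n" and les: "length es = n"
  shows "y \<bullet> (diagm es *\<^sub>v y) = (\<Sum>i<n. es ! i * (y $ i)^2)"
proof -
  have "(diagm es *\<^sub>v y) $ i = es ! i * y $ i" if i: "i < n" for i
  proof -
    have "(diagm es *\<^sub>v y) $ i = (\<Sum>j<n. (if i = j then es ! i else 0) * y $ j)"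
      using i y les by (subst mult_mat_vec_index[of _ n n]) (auto simp: diagm_def)
    also have "\<dots> = es ! i * y $ i" using i
      by (simp add: if_distrib[of "\<lambda>x. x * _"] sum.delta cong: if_cong)
    finally show ?thesis .
  qed
  thus ?thesis using y les unfolding scalar_prod_def
    by (auto simp: lessThan_atLeast0 power2_eq_square diagm_def intro!: sum.cong)
qed

lemma quad_form_eigenbasis:
  fixes A P :: "real mat"
  assumes A: "A \<in> carrier_mat n n" and P: "orthonormal_mat n P"
    and D: "transpose_mat P * A * P = diagm es" and les: "length es = n"
    and x: "x \<in> carrier_vec n"
  shows "x \<bullet> (A *\<^sub>v x) = (\<Sum>i<n. es ! i * ((transpose_mat P *\<^sub>v x) $ i)^2)"
proof -
  have Pc: "P \<in> carrier_mat n n" using P unfolding orthonormal_mat_def by auto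
  define y where "y = transpose_mat P *\<^sub>v x"
  have y: "y \<in> carrier_vec n" unfolding y_def using Pc x by auto
  have xPy: "x = P *\<^sub>v y" unfolding y_def using Pc x orthonormal_mat_right_inverse[OF P]
    by (simp add: assoc_mult_mat_vec[of _ n n _ n, symmetric])
  have "x \<bullet> (A *\<^sub>v x) = y \<bullet> (transpose_mat P *\<^sub>v (A *\<^sub>v (P *\<^sub>v y)))"
    unfolding xPy
    using transpose_vec_mult_scalar[of "transpose_mat P" n n "A *\<^sub>v (P *\<^sub>v y)" y] Pc A y
    by simp
  also have "transpose_mat P *\<^sub>v (A *\<^sub>v (P *\<^sub>v y)) = diagm es *\<^sub>v y"
    unfolding D[symmetric] using Pc A y by (simp add: assoc_mult_mat_vec[of _ n n _ n])
  also have "y \<bullet> \<dots> = (\<Sum>i<n. es ! i * (y $ i)^2)" by (rule quad_form_diagm[OF y les])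
  finally show ?thesis unfolding y_def .
qed

lemma weighted_sum_squares_pos:
  fixes w y :: "nat \<Rightarrow> real"
  assumes vanish: "\<And>j. j < n \<Longrightarrow> w j \<le> 0 \<Longrightarrow> y j = 0" and i: "i < n" "y i \<noteq> 0"
  shows "(\<Sum>j<n. w j * (y j)^2) > 0"
proof -
  have terms_nonneg: "w j * (y j)^2 \<ge> 0" if "j < n" for j
    using vanish[OF that] by (cases "w j \<le> 0") auto
  have "w i > 0" using vanish i by fastforce
  hence "w i * (y i)^2 > 0" using i by simp
  also have "w i * (y i)^2 \<le> (\<Sum>j<n. w j * (y j)^2)"
    using i terms_nonneg by (intro member_le_sum) auto
  finally show ?thesis .
qed

(* Otherwise some nonzero vector of that image has vanishing coordinates along all
   eigenvectors with nonpositive eigenvalue, so the form is positive on it. *)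
theorem nonpos_eigs_lower_bound:
  fixes A M :: "real mat"
  assumes A: "A \<in> carrier_mat n n" and sym: "transpose_mat A = A" and M: "M \<in> carrier_mat n k"
    and H: "\<And>c. c \<in> carrier_vec k \<Longrightarrow> c \<noteq> 0\<^sub>v k \<Longrightarrow>
              M *\<^sub>v c \<noteq> 0\<^sub>v n \<and> (M *\<^sub>v c) \<bullet> (A *\<^sub>v (M *\<^sub>v c)) \<le> 0"
  shows "k \<le> num_eigs (\<lambda>x. x \<le> 0) A"
proof (rule ccontr)
  obtain P es where P: "orthonormal_mat n P" and les: "length es = n"
    and D: "transpose_mat P * A * P = diagm es"
    using sym_spectral[OF A sym] by auto
  have Pc: "P \<in> carrier_mat n n" using P unfolding orthonormal_mat_def by auto
  define N where "N = {i. i < n \<and> es ! i \<le> 0}"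
  have "num_eigs (\<lambda>x. x \<le> 0) A = card N"
    unfolding num_eigs_orthonormal_diag[OF A P D les] N_def length_filter_conv_card les ..
  moreover assume "\<not> k \<le> num_eigs (\<lambda>x. x \<le> 0) A"
  ultimately have Nk: "card N < k" by simp
  have Q: "transpose_mat P * M \<in> carrier_mat n k" using Pc M by auto
  obtain c where c: "c \<in> carrier_vec k" "c \<noteq> 0\<^sub>v k"
    and vanish: "\<forall>i \<in> N. ((transpose_mat P * M) *\<^sub>v c) $ i = 0"
    using vanishing_combination[OF Q _ Nk] unfolding N_def by auto
  define x where "x = M *\<^sub>v c"
  define y where "y = transpose_mat P *\<^sub>v x"
  have x: "x \<in> carrier_vec n" unfolding x_def using M c by auto
  have y: "y \<in> carrier_vec n" unfolding y_def using Pc x by auto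
  have y_vanish: "y $ j = 0" if "j < n" "es ! j \<le> 0" for j
    using vanish that M c Pc unfolding y_def x_def N_def
    by (simp add: assoc_mult_mat_vec[of _ n n _ k])
  have "x = P *\<^sub>v y" unfolding y_def using Pc x orthonormal_mat_right_inverse[OF P]
    by (simp add: assoc_mult_mat_vec[of _ n n _ n, symmetric])
  hence "y \<noteq> 0\<^sub>v n" using H[OF c] Pc unfolding x_def by auto
  then obtain i where "i < n" "y $ i \<noteq> 0" using vec_nonzero_obtain[OF y] by blast
  hence "(\<Sum>j<n. es ! j * (y $ j)^2) > 0"
    using y_vanish by (intro weighted_sum_squares_pos) auto
  moreover have "(\<Sum>j<n. es ! j * (y $ j)^2) \<le> 0"
    using H[OF c] quad_form_eigenbasis[OF A P D les x] unfolding x_def y_def by simp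
  ultimately show False by simp
qed

lemma adj_mat_carrier: "adj_mat n E \<in> carrier_mat n n"
  unfolding adj_mat_def by simp

lemma adj_mat_sym: "simple_graph n E \<Longrightarrow> transpose_mat (adj_mat n E) = adj_mat n E"
  unfolding simple_graph_def adj_mat_def by (rule eq_matI, auto)

lemma adj_mat_index: "i < n \<Longrightarrow> l < n \<Longrightarrow> adj_mat n E $$ (i,l) = (if E i l then 1 else 0)"
  unfolding adj_mat_def by simp

lemma adj_quad_form_independent:
  assumes g: "simple_graph n E" and x: "x \<in> carrier_vec n"
    and ind: "\<And>v w. v \<in> R \<Longrightarrow> w \<in> R \<Longrightarrow> v \<noteq> w \<Longrightarrow> \<not> E v w"
    and supp: "\<And>i. i < n \<Longrightarrow> i \<notin> R \<Longrightarrow> x $ i = 0"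
  shows "x \<bullet> (adj_mat n E *\<^sub>v x) = 0"
  unfolding quad_form_sum[OF adj_mat_carrier x]
proof (intro sum.neutral ballI)
  fix i l assume i: "i \<in> {..<n}" and l: "l \<in> {..<n}"
  have "\<not> E i i" using g i unfolding simple_graph_def by blast
  hence "\<not> E i l" if "i \<in> R" "l \<in> R" using ind that by (cases "i = l") auto
  thus "x $ i * adj_mat n E $$ (i, l) * x $ l = 0"
    using supp i l by (auto simp: adj_mat_index)
qed

(* On vectors supported on a clique the adjacency form is (sum x)^2 - |x|^2, since the
   adjacency matrix restricted to a clique is J - I. *)
lemma adj_quad_form_clique:
  assumes g: "simple_graph n E" and x: "x \<in> carrier_vec n"
    and cl: "\<And>v w. v \<in> R \<Longrightarrow> w \<in> R \<Longrightarrow> v \<noteq> w \<Longrightarrow> E v w"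
    and supp: "\<And>i. i < n \<Longrightarrow> i \<notin> R \<Longrightarrow> x $ i = 0"
  shows "x \<bullet> (adj_mat n E *\<^sub>v x) = (\<Sum>i<n. x $ i)^2 - (\<Sum>i<n. (x $ i)^2)"
proof -
  have entry: "x $ i * adj_mat n E $$ (i, l) * x $ l
      = x $ i * x $ l - (if i = l then (x $ i)^2 else 0)" if i: "i < n" and l: "l < n" for i l
  proof -
    have "\<not> E i i" using g i unfolding simple_graph_def by blast
    thus ?thesis using cl[of i l] supp[OF i] supp[OF l] i l
      by (cases "i \<in> R \<and> l \<in> R") (auto simp: adj_mat_index power2_eq_square)
  qed
  have "x \<bullet> (adj_mat n E *\<^sub>v x)
      = (\<Sum>i<n. \<Sum>l<n. x $ i * x $ l - (if i = l then (x $ i)^2 else 0))"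
    unfolding quad_form_sum[OF adj_mat_carrier x] using entry by (auto intro!: sum.cong)
  also have "\<dots> = (\<Sum>i<n. x $ i) * (\<Sum>l<n. x $ l) - (\<Sum>i<n. (x $ i)^2)"
    by (simp add: sum_subtractf sum.delta sum_distrib_left sum_distrib_right mult.commute)
  finally show ?thesis by (simp add: power2_eq_square)
qed

(* An independent set R of size k: its k coordinate vectors span a subspace on which the
   adjacency form vanishes. *)
lemma independent_set_nonpos_eigs:
  fixes E :: "nat \<Rightarrow> nat \<Rightarrow> bool"
  assumes g: "simple_graph n E" and R: "R \<subseteq> {0..<n}" and cR: "card R = k"
    and ind: "\<And>v w. v \<in> R \<Longrightarrow> w \<in> R \<Longrightarrow> v \<noteq> w \<Longrightarrow> \<not> E v w"
  shows "k \<le> num_eigs (\<lambda>x. x \<le> 0) (adj_mat n E)"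
proof -
  define rs where "rs = sorted_list_of_set R"
  have rs: "length rs = k" "distinct rs" "set rs = R"
    unfolding rs_def using R cR finite_subset[OF R] by auto
  have rsn: "rs ! j < n" if "j < k" for j using rs R that nth_mem by fastforce
  define M :: "real mat" where "M = mat n k (\<lambda>(i,j). if i = rs ! j then 1 else 0)"
  have M: "M \<in> carrier_mat n k" unfolding M_def by simp
  show ?thesis
  proof (rule nonpos_eigs_lower_bound[OF adj_mat_carrier adj_mat_sym[OF g] M])
    fix c :: "real vec" assume c: "c \<in> carrier_vec k" and c0: "c \<noteq> 0\<^sub>v k"
    define x where "x = M *\<^sub>v c"
    have x: "x \<in> carrier_vec n" unfolding x_def using M c by auto
    have xi: "x $ i = (\<Sum>j<k. (if i = rs ! j then 1 else 0) * c $ j)" if "i < n" for i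
      unfolding x_def using mult_mat_vec_index[OF M c that] that unfolding M_def
      by (auto intro!: sum.cong)
    have x_rs: "x $ (rs ! t) = c $ t" if t: "t < k" for t
    proof -
      have "x $ (rs ! t) = (\<Sum>j<k. (if j = t then c $ j else 0))"
        unfolding xi[OF rsn[OF t]] using rs t by (intro sum.cong refl) (auto simp: nth_eq_iff_index_eq)
      thus ?thesis using t by simp
    qed
    have x_out: "x $ i = 0" if "i < n" "i \<notin> R" for i
      unfolding xi[OF that(1)] using that rs by (intro sum.neutral) auto
    obtain t where t: "t < k" "c $ t \<noteq> 0" using vec_nonzero_obtain[OF c c0] .
    have "x \<noteq> 0\<^sub>v n" using x_rs[OF t(1)] t rsn[OF t(1)] by auto
    moreover have "x \<bullet> (adj_mat n E *\<^sub>v x) = 0"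
      by (rule adj_quad_form_independent[OF g x ind x_out])
    ultimately show "M *\<^sub>v c \<noteq> 0\<^sub>v n \<and> (M *\<^sub>v c) \<bullet> (adj_mat n E *\<^sub>v (M *\<^sub>v c)) \<le> 0"
      unfolding x_def by simp
  qed
qed

(* A clique R = {r_0, ..., r_k} of size k+1: the k vectors e_{r_j} - e_{r_0} (j \<ge> 1) span a
   subspace of vectors supported on R with coordinate sum 0, where the form is -|x|^2 \<le> 0. *)
lemma clique_nonpos_eigs:
  fixes E :: "nat \<Rightarrow> nat \<Rightarrow> bool"
  assumes g: "simple_graph n E" and R: "R \<subseteq> {0..<n}" and cR: "card R = Suc k"
    and cl: "\<And>v w. v \<in> R \<Longrightarrow> w \<in> R \<Longrightarrow> v \<noteq> w \<Longrightarrow> E v w"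
  shows "k \<le> num_eigs (\<lambda>x. x \<le> 0) (adj_mat n E)"
proof -
  define rs where "rs = sorted_list_of_set R"
  have rs: "length rs = Suc k" "distinct rs" "set rs = R"
    unfolding rs_def using R cR finite_subset[OF R] by auto
  have rsn: "rs ! j < n" if "j < Suc k" for j using rs R that nth_mem by fastforce
  define \<delta> :: "nat \<Rightarrow> nat \<Rightarrow> real" where
    "\<delta> i j = (if i = rs ! Suc j then 1 else 0) - (if i = rs ! 0 then 1 else 0)" for i j
  define M :: "real mat" where "M = mat n k (\<lambda>(i,j). \<delta> i j)"
  have M: "M \<in> carrier_mat n k" unfolding M_def by simp
  show ?thesis
  proof (rule nonpos_eigs_lower_bound[OF adj_mat_carrier adj_mat_sym[OF g] M])
    fix c :: "real vec" assume c: "c \<in> carrier_vec k" and c0: "c \<noteq> 0\<^sub>v k"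
    define x where "x = M *\<^sub>v c"
    have x: "x \<in> carrier_vec n" unfolding x_def using M c by auto
    have xi: "x $ i = (\<Sum>j<k. c $ j * \<delta> i j)" if "i < n" for i
      unfolding x_def using mult_mat_vec_index[OF M c that] that unfolding M_def
      by (auto simp: mult.commute intro!: sum.cong)
    have x_rs: "x $ (rs ! Suc t) = c $ t" if t: "t < k" for t
    proof -
      have r_t: "rs ! Suc t < n" using rsn t by simp
      have "x $ (rs ! Suc t) = (\<Sum>j<k. (if j = t then c $ j else 0))"
        unfolding xi[OF r_t] \<delta>_def using rs t
        by (intro sum.cong refl) (auto simp: nth_eq_iff_index_eq)
      thus ?thesis using t by simp
    qed
    have x_out: "x $ i = 0" if "i < n" "i \<notin> R" for i
      unfolding xi[OF that(1)] \<delta>_def using that rs by (intro sum.neutral) auto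
    have "(\<Sum>i<n. x $ i) = (\<Sum>i<n. \<Sum>j<k. c $ j * \<delta> i j)"
      by (intro sum.cong refl) (simp add: xi)
    also have "\<dots> = (\<Sum>j<k. c $ j * (\<Sum>i<n. \<delta> i j))"
      unfolding sum_distrib_left by (rule sum.swap)
    also have "\<dots> = 0"
      by (intro sum.neutral ballI) (simp add: \<delta>_def sum_subtractf sum.delta' rsn)
    finally have x_sum: "(\<Sum>i<n. x $ i) = 0" .
    obtain t where t: "t < k" "c $ t \<noteq> 0" using vec_nonzero_obtain[OF c c0] .
    have "x \<noteq> 0\<^sub>v n" using x_rs[OF t(1)] t rsn[of "Suc t"] by auto
    moreover have "x \<bullet> (adj_mat n E *\<^sub>v x) \<le> 0"
      using adj_quad_form_clique[OF g x cl x_out] x_sum by (simp add: sum_nonneg)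
    ultimately show "M *\<^sub>v c \<noteq> 0\<^sub>v n \<and> (M *\<^sub>v c) \<bullet> (adj_mat n E *\<^sub>v (M *\<^sub>v c)) \<le> 0"
      unfolding x_def by simp
  qed
qed

(* By Ramsey's theorem every large graph contains a clique of size k+1 or an independent set of
   size k, so the set of sizes in the definition of NPO k is nonempty. *)
lemma nonpos_eigs_eventually:
  "\<exists>N. \<forall>m\<ge>N. \<forall>E. simple_graph m E \<longrightarrow> k \<le> num_eigs (\<lambda>x. x \<le> 0) (adj_mat m E)"
proof -
  obtain r where r: "\<forall>(V::nat set) (Es::nat set set). finite V \<and> card V \<ge> r \<longrightarrow>
    (\<exists>R \<subseteq> V. card R = Suc k \<and> clique R Es \<or> card R = k \<and> indep R Es)"
    using ramsey2[of "Suc k" k] by blast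
  show ?thesis
  proof (intro exI allI impI)
    fix m E assume m: "r \<le> m" and g: "simple_graph m E"
    define Es where "Es = {{i, j} | i j. i < m \<and> j < m \<and> E i j}"
    obtain R where R: "R \<subseteq> {0..<m}"
      and RR: "card R = Suc k \<and> clique R Es \<or> card R = k \<and> indep R Es"
      using r[rule_format, of "{0..<m}" Es] m by auto
    have edge: "{v, w} \<in> Es \<longleftrightarrow> E v w" if "v < m" "w < m" for v w
    proof
      assume "{v, w} \<in> Es"
      then obtain i j where "{v, w} = {i, j}" "i < m" "j < m" "E i j" unfolding Es_def by auto
      thus "E v w" using g that unfolding simple_graph_def by (metis doubleton_eq_iff)
    qed (use that in \<open>auto simp: Es_def\<close>)
    from RR show "k \<le> num_eigs (\<lambda>x. x \<le> 0) (adj_mat m E)"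
    proof
      assume "card R = Suc k \<and> clique R Es"
      thus ?thesis using R edge
        by (intro clique_nonpos_eigs[OF g R]) (auto simp: clique_def subset_iff)
    next
      assume "card R = k \<and> indep R Es"
      thus ?thesis using R edge
        by (intro independent_set_nonpos_eigs[OF g R]) (auto simp: indep_def subset_iff)
    qed
  qed
qed

lemma NPO_spec:
  assumes "NPO k \<le> n" and "simple_graph n E"
  shows "k \<le> num_eigs (\<lambda>x. x \<le> 0) (adj_mat n E)"
proof -
  obtain N where "\<forall>m\<ge>N. \<forall>E. simple_graph m E \<longrightarrow> k \<le> num_eigs (\<lambda>x. x \<le> 0) (adj_mat m E)"
    using nonpos_eigs_eventually by blast
  hence "\<forall>m\<ge>NPO k. \<forall>E. simple_graph m E \<longrightarrow> k \<le> num_eigs (\<lambda>x. x \<le> 0) (adj_mat m E)"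
    unfolding NPO_def by (rule LeastI)
  thus ?thesis using assms by blast
qed

(* For a d-regular graph L = d I - A, so \<mu> is a Laplacian eigenvalue >= d exactly when
   d - \<mu> is an adjacency eigenvalue <= 0, with the same multiplicity. *)
lemma regular_lap_num_eigs:
  assumes g: "simple_graph n E" and reg: "regular n E d"
  shows "num_eigs (\<lambda>x. real d \<le> x) (lap_mat n E) = num_eigs (\<lambda>x. x \<le> 0) (adj_mat n E)"
proof -
  obtain P es where P: "orthonormal_mat n P" and les: "length es = n"
    and D: "transpose_mat P * adj_mat n E * P = diagm es"
    using sym_spectral[OF adj_mat_carrier adj_mat_sym[OF g]] by auto
  have Pc: "P \<in> carrier_mat n n" and PP: "transpose_mat P * P = 1\<^sub>m n"
    using P unfolding orthonormal_mat_def by auto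
  have lap: "lap_mat n E = real d \<cdot>\<^sub>m 1\<^sub>m n - adj_mat n E"
  proof -
    have "deg_mat n E = real d \<cdot>\<^sub>m 1\<^sub>m n"
      using reg by (auto intro!: eq_matI simp: deg_mat_def regular_def)
    thus ?thesis unfolding lap_mat_def by simp
  qed
  have L: "lap_mat n E \<in> carrier_mat n n" unfolding lap by (auto simp: adj_mat_def)
  have Pt: "transpose_mat P \<in> carrier_mat n n" using Pc by simp
  have dI: "real d \<cdot>\<^sub>m 1\<^sub>m n \<in> carrier_mat n n" by simp
  have "transpose_mat P * lap_mat n E * P
      = transpose_mat P * (real d \<cdot>\<^sub>m 1\<^sub>m n) * P - transpose_mat P * adj_mat n E * P"
    unfolding lap mult_minus_distrib_mat[OF Pt dI adj_mat_carrier]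
    by (rule minus_mult_distrib_mat[OF _ _ Pc]) (use Pt dI adj_mat_carrier[of n E] in auto)
  also have "transpose_mat P * (real d \<cdot>\<^sub>m 1\<^sub>m n) * P = real d \<cdot>\<^sub>m 1\<^sub>m n"
    using mult_smult_distrib[OF Pt one_carrier_mat] mult_smult_assoc_mat[OF Pt Pc] Pt PP by simp
  also have "real d \<cdot>\<^sub>m 1\<^sub>m n - transpose_mat P * adj_mat n E * P
      = diagm (map (\<lambda>x. real d - x) es)" unfolding D
    by (rule eq_matI, auto simp: diagm_def les)
  finally have DL: "transpose_mat P * lap_mat n E * P = diagm (map (\<lambda>x. real d - x) es)" .
  have "num_eigs (\<lambda>x. real d \<le> x) (lap_mat n E)
      = length (filter (\<lambda>x. real d \<le> x) (map (\<lambda>x. real d - x) es))"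
    by (rule num_eigs_orthonormal_diag[OF L P DL], simp add: les)
  also have "\<dots> = length (filter (\<lambda>x. x \<le> 0) es)" by (simp add: filter_map o_def)
  also have "\<dots> = num_eigs (\<lambda>x. x \<le> 0) (adj_mat n E)"
    by (rule num_eigs_orthonormal_diag[OF adj_mat_carrier P D les, symmetric])
  finally show ?thesis .
qed

theorem mainTheorem18:
  fixes n d k :: nat and E :: "nat \<Rightarrow> nat \<Rightarrow> bool"
  assumes "simple_graph n E" and "regular n E d" and "0 < k"
    and "NPO k \<le> n" and "n < NPO (k + 1)"
  shows "k \<le> num_eigs (\<lambda>x. real d \<le> x) (lap_mat n E)"
  using NPO_spec[OF assms(4,1)] regular_lap_num_eigs[OF assms(1,2)] by simp

end
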